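(* Let $G$ be a connected graph with girth at least $5$ and maximum degree $\Delta$, and suppose $G$ is not $\Delta$-regular (i.e. some vertex has degree at most $\Delta-1$). Then $\chi_D(G)\le\Delta+1$.
   Context: A $k$-coloring of $G$ is a map $\varphi:V(G)\to\{1,\dots,k\}$; it is proper if adjacent vertices get different colors, and distinguishing if the only automorphism $f$ of $G$ with $\varphi(f(v))=\varphi(v)$ for all $v$ is the identity. $\chi_D(G)$ is the smallest number of colors in a proper distinguishing coloring of $G$. *)

theory Defs
  imports Main
begin

definition simple_graph :: "'a set \<Rightarrow> ('a \<Rightarrow> 'a \<Rightarrow> bool) \<Rightarrow> bool" where
  "simple_graph V E \<longleftrightarrow> finite V \<and> (\<forall>u v. E u v \<longrightarrow> u \<in> V \<and> v \<in> V)
     \<and> (\<forall>u v. E u v \<longrightarrow> E v u) \<and> (\<forall>v. \<not> E v v)"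

definition connected_graph :: "'a set \<Rightarrow> ('a \<Rightarrow> 'a \<Rightarrow> bool) \<Rightarrow> bool" where
  "connected_graph V E \<longleftrightarrow> V \<noteq> {} \<and> (\<forall>u\<in>V. \<forall>v\<in>V. E\<^sup>*\<^sup>* u v)"

definition degree :: "'a set \<Rightarrow> ('a \<Rightarrow> 'a \<Rightarrow> bool) \<Rightarrow> 'a \<Rightarrow> nat" where
  "degree V E v = card {u \<in> V. E v u}"

definition max_degree :: "'a set \<Rightarrow> ('a \<Rightarrow> 'a \<Rightarrow> bool) \<Rightarrow> nat" where
  "max_degree V E = Max (degree V E ` V)"

definition is_cycle :: "'a set \<Rightarrow> ('a \<Rightarrow> 'a \<Rightarrow> bool) \<Rightarrow> 'a list \<Rightarrow> bool" where
  "is_cycle V E vs \<longleftrightarrow> length vs \<ge> 3 \<and> distinct vs \<and> set vs \<subseteq> V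
     \<and> (\<forall>i < length vs. E (vs ! i) (vs ! ((i + 1) mod length vs)))"

definition girth_at_least :: "'a set \<Rightarrow> ('a \<Rightarrow> 'a \<Rightarrow> bool) \<Rightarrow> nat \<Rightarrow> bool" where
  "girth_at_least V E k \<longleftrightarrow> (\<forall>vs. is_cycle V E vs \<longrightarrow> length vs \<ge> k)"

definition automorphism :: "'a set \<Rightarrow> ('a \<Rightarrow> 'a \<Rightarrow> bool) \<Rightarrow> ('a \<Rightarrow> 'a) \<Rightarrow> bool" where
  "automorphism V E f \<longleftrightarrow> bij_betw f V V \<and> (\<forall>u\<in>V. \<forall>v\<in>V. E (f u) (f v) \<longleftrightarrow> E u v)"

definition k_coloring :: "'a set \<Rightarrow> nat \<Rightarrow> ('a \<Rightarrow> nat) \<Rightarrow> bool" where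
  "k_coloring V k c \<longleftrightarrow> (\<forall>v\<in>V. c v \<in> {1..k})"

definition proper_coloring :: "'a set \<Rightarrow> ('a \<Rightarrow> 'a \<Rightarrow> bool) \<Rightarrow> ('a \<Rightarrow> nat) \<Rightarrow> bool" where
  "proper_coloring V E c \<longleftrightarrow> (\<forall>u\<in>V. \<forall>v\<in>V. E u v \<longrightarrow> c u \<noteq> c v)"

definition distinguishing_coloring :: "'a set \<Rightarrow> ('a \<Rightarrow> 'a \<Rightarrow> bool) \<Rightarrow> ('a \<Rightarrow> nat) \<Rightarrow> bool" where
  "distinguishing_coloring V E c \<longleftrightarrow>
     (\<forall>f. automorphism V E f \<and> (\<forall>v\<in>V. c (f v) = c v) \<longrightarrow> (\<forall>v\<in>V. f v = v))"

definition distinguishing_chromatic_number :: "'a set \<Rightarrow> ('a \<Rightarrow> 'a \<Rightarrow> bool) \<Rightarrow> nat" where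
  "distinguishing_chromatic_number V E =
     (LEAST k. \<exists>c. k_coloring V k c \<and> proper_coloring V E c \<and> distinguishing_coloring V E c)"

end

theory Submission
  imports Defs
begin

text \<open>Pick a vertex r of degree below \<Delta> and reserve the colour \<Delta>+1 for r and for vertices of
degree \<Delta>; then every colour-preserving automorphism fixes r. Grow a properly coloured vertex set
S containing r such that every colour-preserving automorphism fixes S pointwise. If a vertex w
outside S has two neighbours in S, give w any colour missing on its neighbours in S (there are at
most deg w of them, and \<Delta>+1 is allowed exactly when deg w = \<Delta>); since girth \<ge> 5 forbids a
second common neighbour of those two, w is fixed. Otherwise take p in S with neighbours outside S;
each has p as its only neighbour in S, and there are at most \<Delta>-1 of them because p has a
neighbour in S or p = r. Colour them injectively from {1..\<Delta>} minus the colour of p: an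
automorphism fixing S permutes them, preserves their colours and hence fixes them. Connectivity
lets S grow until it is all of V.\<close>

lemma simple_graph_sym: "simple_graph V E \<Longrightarrow> E u v \<Longrightarrow> E v u"
  unfolding simple_graph_def by blast

lemma simple_graph_irrefl: "simple_graph V E \<Longrightarrow> \<not> E v v"
  unfolding simple_graph_def by blast

lemma simple_graph_adj_in: "simple_graph V E \<Longrightarrow> E u v \<Longrightarrow> u \<in> V \<and> v \<in> V"
  unfolding simple_graph_def by blast

lemma simple_graph_finite: "simple_graph V E \<Longrightarrow> finite V"
  unfolding simple_graph_def by blast

lemma automorphism_in: "automorphism V E f \<Longrightarrow> v \<in> V \<Longrightarrow> f v \<in> V"
  unfolding automorphism_def by (meson bij_betw_apply)

lemma automorphism_adj: "automorphism V E f \<Longrightarrow> u \<in> V \<Longrightarrow> v \<in> V \<Longrightarrow> E (f u) (f v) \<longleftrightarrow> E u v"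
  unfolding automorphism_def by blast

lemma degree_automorphism:
  assumes a: "automorphism V E f" and v: "v \<in> V"
  shows "degree V E (f v) = degree V E v"
proof -
  have bij: "bij_betw f V V"
    using a unfolding automorphism_def by blast
  have "{u \<in> V. E (f v) u} = f ` {u \<in> V. E v u}"
  proof
    show "{u \<in> V. E (f v) u} \<subseteq> f ` {u \<in> V. E v u}"
    proof
      fix u assume u: "u \<in> {u \<in> V. E (f v) u}"
      then obtain y where "y \<in> V" "u = f y"
        using bij bij_betw_imp_surj_on by blast
      then show "u \<in> f ` {u \<in> V. E v u}"
        using u automorphism_adj[OF a v] by auto
    qed
    show "f ` {u \<in> V. E v u} \<subseteq> {u \<in> V. E (f v) u}"
      using automorphism_adj[OF a v] automorphism_in[OF a] by auto
  qed
  moreover have "inj_on f {u \<in> V. E v u}"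
    by (rule inj_on_subset[OF bij_betw_imp_inj_on[OF bij]]) auto
  ultimately show ?thesis
    unfolding degree_def by (simp add: card_image)
qed

lemma automorphism_maps_outer_neighbour:
  assumes a: "automorphism V E f" and S: "S \<subseteq> V" "\<forall>v\<in>S. f v = v"
    and p: "p \<in> S" and u: "u \<in> V" "u \<notin> S" "E p u"
  shows "f u \<in> V - S \<and> E p (f u)"
proof -
  have fu: "f u \<in> V"
    using automorphism_in[OF a u(1)] .
  have "E (f p) (f u)"
    using automorphism_adj[OF a] p S u by blast
  then have "E p (f u)"
    using p S by simp
  moreover have "f u \<notin> S"
  proof
    assume "f u \<in> S"
    then have "f (f u) = f u"
      using S by blast
    moreover have "inj_on f V"
      using a unfolding automorphism_def bij_betw_def by blast
    ultimately have "f u = u"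
      using fu u(1) by (simp add: inj_on_eq_iff)
    then show False
      using \<open>f u \<in> S\<close> u by simp
  qed
  ultimately show ?thesis
    using fu by blast
qed

lemma girth5_common_neighbours_eq:
  assumes sg: "simple_graph V E" and gi: "girth_at_least V E 5"
    and "a \<noteq> b" "E w a" "E w b" "E x a" "E x b"
  shows "w = x"
proof (rule ccontr)
  assume "w \<noteq> x"
  have s: "\<And>u v. E u v \<Longrightarrow> E v u"
    using sg simple_graph_sym by metis
  have "distinct [a, w, b, x]"
    using assms \<open>w \<noteq> x\<close> simple_graph_irrefl[OF sg] by auto
  moreover have "\<forall>i<4. E ([a, w, b, x] ! i) ([a, w, b, x] ! ((i + 1) mod 4))"
  proof (intro allI impI)
    fix i :: nat assume "i < 4"
    then have "i = 0 \<or> i = 1 \<or> i = 2 \<or> i = 3" by auto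
    then show "E ([a, w, b, x] ! i) ([a, w, b, x] ! ((i + 1) mod 4))"
      using assms s by auto
  qed
  moreover have "set [a, w, b, x] \<subseteq> V"
    using assms simple_graph_adj_in[OF sg] by auto
  ultimately have "is_cycle V E [a, w, b, x]"
    unfolding is_cycle_def by simp
  then show False
    using gi unfolding girth_at_least_def by fastforce
qed

lemma rtranclp_leaves_set:
  assumes "R\<^sup>*\<^sup>* x y" "x \<in> S" "y \<notin> S"
  shows "\<exists>p\<in>S. \<exists>w. w \<notin> S \<and> R p w"
  using assms by (induction rule: rtranclp.induct) blast+

lemma connected_graph_boundary_edge:
  assumes sg: "simple_graph V E" and conn: "connected_graph V E"
    and S: "r \<in> S" "S \<subseteq> V" "S \<noteq> V"
  shows "\<exists>p\<in>S. \<exists>w\<in>V - S. E p w"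
proof -
  obtain v where "v \<in> V" "v \<notin> S"
    using S by blast
  moreover have "E\<^sup>*\<^sup>* r v"
    using conn S \<open>v \<in> V\<close> unfolding connected_graph_def by blast
  ultimately show ?thesis
    using rtranclp_leaves_set[of E r v S] S simple_graph_adj_in[OF sg] by blast
qed

lemma ex_not_in_of_card_less: "finite A \<Longrightarrow> card A < card T \<Longrightarrow> \<exists>x\<in>T. x \<notin> A"
  by (metis card_mono not_le subsetI)

definition top_colour_reserved :: "'a set \<Rightarrow> ('a \<Rightarrow> 'a \<Rightarrow> bool) \<Rightarrow> 'a \<Rightarrow> nat \<Rightarrow> 'a set \<Rightarrow> ('a \<Rightarrow> nat) \<Rightarrow> bool" where
  "top_colour_reserved V E r D A c \<longleftrightarrow> (\<forall>v\<in>A. c v = Suc D \<longrightarrow> v = r \<or> degree V E v = D)"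

text \<open>Quantifying over all extensions c' makes rigidity independent of how the rest of V is
coloured later.\<close>
definition rigid_on :: "'a set \<Rightarrow> ('a \<Rightarrow> 'a \<Rightarrow> bool) \<Rightarrow> 'a \<Rightarrow> nat \<Rightarrow> 'a set \<Rightarrow> ('a \<Rightarrow> nat) \<Rightarrow> bool" where
  "rigid_on V E r D S c \<longleftrightarrow>
     (\<forall>c' f. (\<forall>v\<in>S. c' v = c v) \<longrightarrow> top_colour_reserved V E r D V c' \<longrightarrow>
        automorphism V E f \<longrightarrow> (\<forall>v\<in>V. c' (f v) = c' v) \<longrightarrow> (\<forall>v\<in>S. f v = v))"

lemma rigid_onD:
  "rigid_on V E r D S c \<Longrightarrow> \<forall>v\<in>S. c' v = c v \<Longrightarrow> top_colour_reserved V E r D V c' \<Longrightarrow>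
    automorphism V E f \<Longrightarrow> \<forall>v\<in>V. c' (f v) = c' v \<Longrightarrow> v \<in> S \<Longrightarrow> f v = v"
  unfolding rigid_on_def by blast

lemma rigid_on_extend:
  assumes rig: "rigid_on V E r D S c" and agree: "\<forall>v\<in>S. c2 v = c v" and "S \<subseteq> S'"
    and new: "\<And>c' f. \<forall>v\<in>S'. c' v = c2 v \<Longrightarrow> automorphism V E f \<Longrightarrow> \<forall>v\<in>V. c' (f v) = c' v \<Longrightarrow>
      \<forall>v\<in>S. f v = v \<Longrightarrow> \<forall>v\<in>S'. f v = v"
  shows "rigid_on V E r D S' c2"
  unfolding rigid_on_def
proof (intro allI impI)
  fix c' f
  assume c': "\<forall>v\<in>S'. c' v = c2 v" and res: "top_colour_reserved V E r D V c'"
    and a: "automorphism V E f" and pres: "\<forall>v\<in>V. c' (f v) = c' v"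
  have "\<forall>v\<in>S. c' v = c v"
    using c' agree \<open>S \<subseteq> S'\<close> by auto
  then have "\<forall>v\<in>S. f v = v"
    using rigid_onD[OF rig _ res a pres] by blast
  then show "\<forall>v\<in>S'. f v = v"
    using new[OF c' a pres] by blast
qed

lemma rigid_on_insert_common_neighbour:
  assumes sg: "simple_graph V E" and gi: "girth_at_least V E 5"
    and rig: "rigid_on V E r D S c" and SV: "S \<subseteq> V" and agree: "\<forall>v\<in>S. c2 v = c v"
    and w: "w \<in> V" and ab: "a \<in> S" "b \<in> S" "a \<noteq> b" "E w a" "E w b"
  shows "rigid_on V E r D (insert w S) c2"
proof (rule rigid_on_extend[OF rig agree])
  fix c' f
  assume a: "automorphism V E f" and fS: "\<forall>v\<in>S. f v = v"
  have "a \<in> V" "b \<in> V"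
    using ab SV by auto
  then have "E (f w) a" "E (f w) b"
    using automorphism_adj[OF a w] fS ab by force+
  then have "f w = w"
    using girth5_common_neighbours_eq[OF sg gi \<open>a \<noteq> b\<close> _ _ \<open>E w a\<close> \<open>E w b\<close>] by blast
  then show "\<forall>v\<in>insert w S. f v = v"
    using fS by blast
qed blast

lemma rigid_on_union_outer_neighbours:
  assumes rig: "rigid_on V E r D S c" and SV: "S \<subseteq> V" and p: "p \<in> S"
    and agree: "\<forall>v\<in>S. c2 v = c v" and inj: "inj_on c2 {u \<in> V - S. E p u}"
  shows "rigid_on V E r D (S \<union> {u \<in> V - S. E p u}) c2"
proof (rule rigid_on_extend[OF rig agree])
  fix c' f
  assume c': "\<forall>v\<in>S \<union> {u \<in> V - S. E p u}. c' v = c2 v" and a: "automorphism V E f"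
    and pres: "\<forall>v\<in>V. c' (f v) = c' v" and fS: "\<forall>v\<in>S. f v = v"
  show "\<forall>v\<in>S \<union> {u \<in> V - S. E p u}. f v = v"
  proof
    fix v assume v: "v \<in> S \<union> {u \<in> V - S. E p u}"
    show "f v = v"
    proof (cases "v \<in> S")
      case True
      then show ?thesis
        using fS by blast
    next
      case False
      then have vB: "v \<in> V" "v \<notin> S" "E p v"
        using v by auto
      then have fvB: "f v \<in> V - S" "E p (f v)"
        using automorphism_maps_outer_neighbour[OF a SV fS p] by auto
      have "c2 (f v) = c2 v"
        using c' pres fvB vB by auto
      then show ?thesis
        using inj fvB vB by (simp add: inj_on_eq_iff)
    qed
  qed
qed blast

lemma proper_coloring_union_outer_neighbours:
  assumes sg: "simple_graph V E" and pr: "proper_coloring S E c" and p: "p \<in> S"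
    and agree: "\<forall>v\<in>S. c2 v = c v"
    and sole: "\<And>u y. u \<in> V - S \<Longrightarrow> E p u \<Longrightarrow> y \<in> S \<Longrightarrow> E u y \<Longrightarrow> y = p"
    and inj: "inj_on c2 {u \<in> V - S. E p u}" and avoid: "\<And>u. u \<in> V - S \<Longrightarrow> E p u \<Longrightarrow> c2 u \<noteq> c p"
  shows "proper_coloring (S \<union> {u \<in> V - S. E p u}) E c2"
  unfolding proper_coloring_def
proof (intro ballI impI)
  define B where "B = {u \<in> V - S. E p u}"
  fix u v assume u: "u \<in> S \<union> B" and v: "v \<in> S \<union> B" and e: "E u v"
  have e': "E v u"
    using simple_graph_sym[OF sg e] .
  consider "u \<in> B" "v \<in> B" | "u \<in> B" "v \<in> S" | "u \<in> S" "v \<in> B" | "u \<in> S" "v \<in> S"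
    using u v by blast
  then show "c2 u \<noteq> c2 v"
  proof cases
    case 1
    moreover have "u \<noteq> v"
      using e simple_graph_irrefl[OF sg] by blast
    ultimately show ?thesis
      using inj unfolding B_def by (simp add: inj_on_eq_iff)
  next
    case 2
    then have "v = p"
      using e sole unfolding B_def by blast
    then have "c2 v = c p"
      using p agree by simp
    moreover have "c2 u \<noteq> c p"
      using 2 avoid unfolding B_def by blast
    ultimately show ?thesis
      by simp
  next
    case 3
    then have "u = p"
      using e' sole unfolding B_def by blast
    then have "c2 u = c p"
      using p agree by simp
    moreover have "c2 v \<noteq> c p"
      using 3 avoid unfolding B_def by blast
    ultimately show ?thesis
      by simp
  next
    case 4
    then show ?thesis
      using e pr agree unfolding proper_coloring_def by auto
  qed
qed

definition good_partial_colouring :: "'a set \<Rightarrow> ('a \<Rightarrow> 'a \<Rightarrow> bool) \<Rightarrow> 'a \<Rightarrow> nat \<Rightarrow> 'a set \<Rightarrow> ('a \<Rightarrow> nat) \<Rightarrow> bool" where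
  "good_partial_colouring V E r D S c \<longleftrightarrow> r \<in> S \<and> S \<subseteq> V \<and> c r = Suc D \<and>
     k_coloring S (Suc D) c \<and> top_colour_reserved V E r D S c \<and> proper_coloring S E c \<and>
     (\<forall>v\<in>S - {r}. \<exists>q\<in>S. E v q) \<and> rigid_on V E r D S c"

context
  fixes V :: "'a set" and E :: "'a \<Rightarrow> 'a \<Rightarrow> bool" and r :: 'a and D :: nat
  assumes sg: "simple_graph V E" and gi: "girth_at_least V E 5"
    and rV: "r \<in> V" and rdeg: "degree V E r < D" and maxd: "\<forall>v\<in>V. degree V E v \<le> D"
begin

lemma good_partial_colouring_root: "good_partial_colouring V E r D {r} (\<lambda>_. Suc D)"
proof -
  have "rigid_on V E r D {r} (\<lambda>_. Suc D)"
    unfolding rigid_on_def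
  proof (intro allI impI ballI)
    fix c' f v
    assume c': "\<forall>v\<in>{r}. c' v = Suc D" and res: "top_colour_reserved V E r D V c'"
      and a: "automorphism V E f" and pres: "\<forall>v\<in>V. c' (f v) = c' v" and v: "v \<in> {r}"
    have "c' (f r) = Suc D" and "degree V E (f r) \<noteq> D"
      using c' pres rV degree_automorphism[OF a rV] rdeg by auto
    then show "f v = v"
      using res automorphism_in[OF a rV] v unfolding top_colour_reserved_def by blast
  qed
  then show ?thesis
    unfolding good_partial_colouring_def k_coloring_def top_colour_reserved_def proper_coloring_def
    using rV simple_graph_irrefl[OF sg] by auto
qed

lemma extend_at_common_neighbour:
  assumes g: "good_partial_colouring V E r D S c"
    and w: "w \<in> V" "w \<notin> S" and ab: "a \<in> S" "b \<in> S" "a \<noteq> b" "E w a" "E w b"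
  shows "\<exists>c2. good_partial_colouring V E r D (insert w S) c2"
proof -
  have rS: "r \<in> S" and SV: "S \<subseteq> V" and cr: "c r = Suc D" and col: "k_coloring S (Suc D) c"
    and res: "top_colour_reserved V E r D S c" and pr: "proper_coloring S E c"
    and nb: "\<forall>v\<in>S - {r}. \<exists>q\<in>S. E v q" and rig: "rigid_on V E r D S c"
    using g unfolding good_partial_colouring_def by blast+
  define N where "N = c ` {u \<in> S. E w u}"
  define T where "T = (if degree V E w = D then {1..Suc D} else {1..D})"
  have "finite S"
    using SV simple_graph_finite[OF sg] finite_subset by blast
  then have "card N \<le> card {u \<in> S. E w u}"
    unfolding N_def by (intro card_image_le) simp
  also have "\<dots> \<le> degree V E w"
    unfolding degree_def using SV simple_graph_finite[OF sg] by (intro card_mono) auto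
  also have "\<dots> < card T"
    using maxd w unfolding T_def by (cases "degree V E w = D") auto
  finally have "card N < card T" .
  moreover have "finite N"
    unfolding N_def using \<open>finite S\<close> by simp
  ultimately obtain x where x: "x \<in> T" "x \<notin> N"
    using ex_not_in_of_card_less by blast
  define c2 where "c2 = c(w := x)"
  have agree: "\<forall>v\<in>S. c2 v = c v"
    using w(2) unfolding c2_def by auto
  have "proper_coloring (insert w S) E c2"
    unfolding proper_coloring_def
  proof (intro ballI impI)
    fix u v assume u: "u \<in> insert w S" and v: "v \<in> insert w S" and e: "E u v"
    have "x \<noteq> c y" if "y \<in> S" "E w y" for y
      using x(2) that unfolding N_def by blast
    then show "c2 u \<noteq> c2 v"
      using u v e pr w(2) simple_graph_sym[OF sg, of u v] simple_graph_irrefl[OF sg, of u]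
      unfolding c2_def proper_coloring_def by auto
  qed
  moreover have "x \<in> {1..Suc D}" and "x = Suc D \<longrightarrow> degree V E w = D"
    using x(1) unfolding T_def by (auto split: if_splits)
  then have "k_coloring (insert w S) (Suc D) c2" and "top_colour_reserved V E r D (insert w S) c2"
    using col res w(2) unfolding c2_def k_coloring_def top_colour_reserved_def by auto
  moreover have "\<forall>v\<in>insert w S - {r}. \<exists>q\<in>insert w S. E v q"
    using nb ab by blast
  moreover have "c2 r = Suc D"
    using cr rS agree by auto
  moreover have "rigid_on V E r D (insert w S) c2"
    using rigid_on_insert_common_neighbour[OF sg gi rig SV agree w(1) ab] .
  ultimately have "good_partial_colouring V E r D (insert w S) c2"
    using rS SV w(1) unfolding good_partial_colouring_def by blast
  then show ?thesis
    by blast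
qed

text \<open>p = r has degree below D, and any other p already has a neighbour in S.\<close>
lemma card_outer_neighbours_le:
  assumes g: "good_partial_colouring V E r D S c" and p: "p \<in> S"
  shows "card {u \<in> V - S. E p u} \<le> card ({1..D} - {c p})"
proof (cases "p = r")
  case True
  have "card {u \<in> V - S. E p u} \<le> degree V E r"
    unfolding degree_def True using simple_graph_finite[OF sg] by (intro card_mono) auto
  moreover have "c p = Suc D"
    using True g unfolding good_partial_colouring_def by blast
  ultimately show ?thesis
    using rdeg by simp
next
  case False
  then obtain q where q: "q \<in> S" "E p q"
    using g p unfolding good_partial_colouring_def by blast
  have "card {u \<in> V - S. E p u} \<le> card ({u \<in> V. E p u} - {q})"
    using q simple_graph_finite[OF sg] by (intro card_mono) auto
  also have "\<dots> = degree V E p - 1"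
    unfolding degree_def using q simple_graph_adj_in[OF sg] simple_graph_finite[OF sg]
    by (simp add: card_Diff_singleton)
  also have "\<dots> \<le> D - 1"
    using maxd p g unfolding good_partial_colouring_def by (simp add: diff_le_mono subset_iff)
  also have "\<dots> \<le> card ({1..D} - {c p})"
    by (simp add: card_Diff_singleton_if)
  finally show ?thesis .
qed

lemma extend_at_leaves:
  assumes g: "good_partial_colouring V E r D S c" and p: "p \<in> S"
    and sole: "\<And>u y. u \<in> V - S \<Longrightarrow> E p u \<Longrightarrow> y \<in> S \<Longrightarrow> E u y \<Longrightarrow> y = p"
  shows "\<exists>c2. good_partial_colouring V E r D (S \<union> {u \<in> V - S. E p u}) c2"
proof -
  have rS: "r \<in> S" and SV: "S \<subseteq> V" and cr: "c r = Suc D" and col: "k_coloring S (Suc D) c"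
    and res: "top_colour_reserved V E r D S c" and pr: "proper_coloring S E c"
    and nb: "\<forall>v\<in>S - {r}. \<exists>q\<in>S. E v q" and rig: "rigid_on V E r D S c"
    using g unfolding good_partial_colouring_def by blast+
  define B where "B = {u \<in> V - S. E p u}"
  have "finite B" "finite ({1..D} - {c p})"
    using simple_graph_finite[OF sg] unfolding B_def by auto
  then obtain \<gamma> where \<gamma>: "\<gamma> ` B \<subseteq> {1..D} - {c p}" "inj_on \<gamma> B"
    using card_le_inj card_outer_neighbours_le[OF g p] unfolding B_def by metis
  define c2 where "c2 = (\<lambda>v. if v \<in> B then \<gamma> v else c v)"
  have agree: "\<forall>v\<in>S. c2 v = c v"
    unfolding c2_def B_def by auto
  have \<gamma>_range: "c2 u \<in> {1..D}" "c2 u \<noteq> c p" if "u \<in> B" for u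
    using \<gamma>(1) that unfolding c2_def by auto
  have "inj_on c2 B"
    using \<gamma>(2) unfolding c2_def inj_on_def by auto
  then have "rigid_on V E r D (S \<union> B) c2" and "proper_coloring (S \<union> B) E c2"
    using rigid_on_union_outer_neighbours[OF rig SV p agree]
      proper_coloring_union_outer_neighbours[OF sg pr p agree sole] \<gamma>_range
    unfolding B_def by auto
  moreover have "k_coloring (S \<union> B) (Suc D) c2"
    using col agree \<gamma>_range(1) unfolding k_coloring_def by fastforce
  moreover have "top_colour_reserved V E r D (S \<union> B) c2"
    using res agree \<gamma>_range(1) unfolding top_colour_reserved_def by fastforce
  moreover have "\<exists>q\<in>S \<union> B. E v q" if "v \<in> S \<union> B - {r}" for v
    using that nb p simple_graph_sym[OF sg, of p v] unfolding B_def by blast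
  moreover have "c2 r = Suc D"
    using cr rS agree by auto
  moreover have "S \<union> B \<subseteq> V"
    using SV unfolding B_def by blast
  ultimately have "good_partial_colouring V E r D (S \<union> B) c2"
    using rS unfolding good_partial_colouring_def by blast
  then show ?thesis
    unfolding B_def by blast
qed

lemma good_partial_colouring_grows:
  assumes conn: "connected_graph V E" and g: "good_partial_colouring V E r D S c" and ne: "S \<noteq> V"
  shows "\<exists>S' c'. good_partial_colouring V E r D S' c' \<and> S \<subset> S'"
proof (cases "\<exists>w\<in>V - S. \<exists>a\<in>S. \<exists>b\<in>S. a \<noteq> b \<and> E w a \<and> E w b")
  case True
  then obtain w a b where "w \<in> V" "w \<notin> S" "a \<in> S" "b \<in> S" "a \<noteq> b" "E w a" "E w b"
    by blast
  moreover obtain c2 where "good_partial_colouring V E r D (insert w S) c2"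
    using extend_at_common_neighbour[OF g \<open>w \<in> V\<close> \<open>w \<notin> S\<close> \<open>a \<in> S\<close> \<open>b \<in> S\<close> \<open>a \<noteq> b\<close> \<open>E w a\<close> \<open>E w b\<close>]
    by blast
  ultimately show ?thesis
    by blast
next
  case False
  have "r \<in> S" "S \<subseteq> V"
    using g unfolding good_partial_colouring_def by blast+
  then obtain p w where p: "p \<in> S" and w: "w \<in> V - S" "E p w"
    using connected_graph_boundary_edge[OF sg conn _ _ ne] by blast
  have "y = p" if "u \<in> V - S" "E p u" "y \<in> S" "E u y" for u y
  proof (rule ccontr)
    assume "y \<noteq> p"
    moreover have "E u p"
      using simple_graph_sym[OF sg \<open>E p u\<close>] .
    ultimately show False
      using False that p by blast
  qed
  then obtain c2 where "good_partial_colouring V E r D (S \<union> {u \<in> V - S. E p u}) c2"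
    using extend_at_leaves[OF g p] by blast
  moreover have "S \<subset> S \<union> {u \<in> V - S. E p u}"
    using w by blast
  ultimately show ?thesis
    by blast
qed

lemma good_partial_colouring_of_vertices:
  assumes conn: "connected_graph V E"
  shows "\<exists>c. good_partial_colouring V E r D V c"
proof -
  have "\<exists>c. good_partial_colouring V E r D V c" if "good_partial_colouring V E r D S c" for S c
    using that
  proof (induction "card (V - S)" arbitrary: S c rule: less_induct)
    case less
    show ?case
    proof (cases "S = V")
      case True
      then show ?thesis
        using less.prems by blast
    next
      case False
      then obtain S' c' where S': "good_partial_colouring V E r D S' c'" "S \<subset> S'"
        using good_partial_colouring_grows[OF conn less.prems] by blast
      then have "S' \<subseteq> V"
        unfolding good_partial_colouring_def by blast
      then have "card (V - S') < card (V - S)"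
        using S'(2) simple_graph_finite[OF sg] by (intro psubset_card_mono) auto
      then show ?thesis
        using less.hyps S'(1) by blast
    qed
  qed
  then show ?thesis
    using good_partial_colouring_root by blast
qed

lemma distinguishing_chromatic_number_le:
  assumes conn: "connected_graph V E"
  shows "distinguishing_chromatic_number V E \<le> Suc D"
proof -
  obtain c where "good_partial_colouring V E r D V c"
    using good_partial_colouring_of_vertices[OF conn] by blast
  then have col: "k_coloring V (Suc D) c" and pr: "proper_coloring V E c"
    and rig: "rigid_on V E r D V c" and res: "top_colour_reserved V E r D V c"
    unfolding good_partial_colouring_def by blast+
  have "distinguishing_coloring V E c"
    unfolding distinguishing_coloring_def
  proof (intro allI impI)
    fix f assume "automorphism V E f \<and> (\<forall>v\<in>V. c (f v) = c v)"
    then show "\<forall>v\<in>V. f v = v"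
      using rigid_onD[OF rig _ res] by blast
  qed
  then show ?thesis
    unfolding distinguishing_chromatic_number_def using col pr by (intro Least_le) blast
qed

end

theorem mainTheorem7:
  fixes V :: "'a set" and E :: "'a \<Rightarrow> 'a \<Rightarrow> bool"
  assumes "simple_graph V E"
    and "connected_graph V E"
    and "girth_at_least V E 5"
    and "\<exists>v\<in>V. degree V E v < max_degree V E"
  shows "distinguishing_chromatic_number V E \<le> max_degree V E + 1"
proof -
  obtain r where r: "r \<in> V" "degree V E r < max_degree V E"
    using assms(4) by blast
  have "\<forall>v\<in>V. degree V E v \<le> max_degree V E"
    unfolding max_degree_def using simple_graph_finite[OF assms(1)] by simp
  then show ?thesis
    using distinguishing_chromatic_number_le[OF assms(1,3) r _ assms(2)] by simp
qed

end
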